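(* Every maximal finitely non-Hausdorff subset of a topological space $X$ is closed in $X$.
   Context: A non-empty subset $A$ of a topological space $X$ is called finitely non-Hausdorff if for every non-empty finite subset $F\subseteq A$ and every family $\{U_x:x\in F\}$ where each $U_x$ is an open neighborhood of $x$, we have $\bigcap_{x\in F}U_x\neq\emptyset$. It is a maximal finitely non-Hausdorff subset if moreover every finitely non-Hausdorff subset $B$ of $X$ with $A\subseteq B$ satisfies $B=A$. *)

theory Defs
  imports "HOL-Analysis.Analysis"
begin

definition finitely_non_hausdorff :: "'a topology \<Rightarrow> 'a set \<Rightarrow> bool" where
  "finitely_non_hausdorff X A \<longleftrightarrow>
     A \<subseteq> topspace X \<and> A \<noteq> {} \<and>
     (\<forall>F U. finite F \<and> F \<noteq> {} \<and> F \<subseteq> A \<and> (\<forall>x\<in>F. openin X (U x) \<and> x \<in> U x)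
        \<longrightarrow> (\<Inter>x\<in>F. U x) \<noteq> {})"

definition maximal_finitely_non_hausdorff :: "'a topology \<Rightarrow> 'a set \<Rightarrow> bool" where
  "maximal_finitely_non_hausdorff X A \<longleftrightarrow>
     finitely_non_hausdorff X A \<and>
     (\<forall>B. finitely_non_hausdorff X B \<and> A \<subseteq> B \<longrightarrow> B = A)"

end

theory Submission
  imports Defs
begin

text \<open>Every point of the closure of A is approximated inside each of its neighbourhoods by a
point of A, so a finite family of neighbourhoods of closure points can be traded for one of
points of A: for b \<in> A intersect those neighbourhoods whose chosen approximant is b. Hence the
closure of a finitely non-Hausdorff set is again finitely non-Hausdorff, and a maximal one
coincides with its closure.\<close>

lemma finitely_non_hausdorffD:
  assumes "finitely_non_hausdorff X A" "finite F" "F \<noteq> {}" "F \<subseteq> A"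
    and "\<And>x. x \<in> F \<Longrightarrow> openin X (U x) \<and> x \<in> U x"
  shows "(\<Inter>x\<in>F. U x) \<noteq> {}"
  using assms unfolding finitely_non_hausdorff_def by blast

lemma finitely_non_hausdorff_closure_of:
  assumes A: "finitely_non_hausdorff X A"
  shows "finitely_non_hausdorff X (X closure_of A)"
  unfolding finitely_non_hausdorff_def
proof (intro conjI allI impI)
  have "A \<subseteq> topspace X" "A \<noteq> {}" using A unfolding finitely_non_hausdorff_def by auto
  then show "X closure_of A \<noteq> {}" using closure_of_subset by blast
  show "X closure_of A \<subseteq> topspace X" by (rule closure_of_subset_topspace)
  fix F U
  assume F: "finite F \<and> F \<noteq> {} \<and> F \<subseteq> X closure_of A \<and> (\<forall>x\<in>F. openin X (U x) \<and> x \<in> U x)"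
  then have "\<forall>x\<in>F. \<exists>a. a \<in> A \<and> a \<in> U x"
    by (metis in_closure_of subsetD)
  then obtain g where g: "\<And>x. x \<in> F \<Longrightarrow> g x \<in> A \<and> g x \<in> U x" by metis
  define V where "V b = (\<Inter>x\<in>{x\<in>F. g x = b}. U x)" for b
  have "openin X (V b) \<and> b \<in> V b" if "b \<in> g ` F" for b
  proof
    show "openin X (V b)" unfolding V_def using F that by (intro openin_Inter) auto
    show "b \<in> V b" unfolding V_def using g by auto
  qed
  with A F g have "(\<Inter>b\<in>g ` F. V b) \<noteq> {}"
    by (intro finitely_non_hausdorffD) auto
  moreover have "(\<Inter>b\<in>g ` F. V b) \<subseteq> (\<Inter>x\<in>F. U x)" unfolding V_def by auto
  ultimately show "(\<Inter>x\<in>F. U x) \<noteq> {}" by blast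
qed

theorem corollary2p6:
  fixes X :: "'a topology" and A :: "'a set"
  assumes "maximal_finitely_non_hausdorff X A"
  shows "closedin X A"
proof -
  have A: "finitely_non_hausdorff X A"
    and maximal: "\<And>B. finitely_non_hausdorff X B \<Longrightarrow> A \<subseteq> B \<Longrightarrow> B = A"
    using assms unfolding maximal_finitely_non_hausdorff_def by auto
  then have "A \<subseteq> X closure_of A"
    unfolding finitely_non_hausdorff_def by (simp add: closure_of_subset)
  with maximal finitely_non_hausdorff_closure_of[OF A] have "X closure_of A = A" by blast
  then show ?thesis by (metis closedin_closure_of)
qed

end
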